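(* Let $\delta\in(0,1)$ and an even integer $n_{\mathrm{in}}\ge2$ be given, let $b_1,b_2,\dots>0$, $b_{\max,i}:=\max_{j\le i}b_j$, and $a_i:=b_ib_{\max,i}(\frac12+\log(2n_{\mathrm{in}}/\delta))$. Define $\sigma_0^2:=0$ and, for $i\ge1$, $$\sigma_i^2:=\sigma_{i-1}^2+b_i^2\Big(1+\frac{\sigma_{i-1}^2}{a_i^2}(b_i^2-2a_i)\Big)_+ .$$ Then for each $i\ge1$, $$\sigma_i^2\le c_i:=\max_{j\in[i]}\max(b_j^2,r_j),\qquad\text{where } r_i:=\frac{a_i^2}{2a_i-b_i^2}\le\frac{a_i^2}{2a_i-b_ib_{\max,i}}.$$
   Context: $(x)_+=\max(x,0)$. (In the paper $b_i=\|\mathbf{k}(x_{2i-1},\cdot)-\mathbf{k}(x_{2i},\cdot)\|_{\mathbf{k}}$ and $a_i$ are the quantities of the Kernel Halving algorithm, and $\sigma_i$ are the sub-Gaussian constants of the associated self-balancing Hilbert walk.) *)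

theory Defs
  imports "HOL-Analysis.Analysis"
begin

text \<open>Sequences are indexed from 1; the value at index 0 is irrelevant.\<close>

definition bmax :: "(nat \<Rightarrow> real) \<Rightarrow> nat \<Rightarrow> real" where
  "bmax b i = Max (b ` {1..i})"

definition kh_a :: "real \<Rightarrow> nat \<Rightarrow> (nat \<Rightarrow> real) \<Rightarrow> nat \<Rightarrow> real" where
  "kh_a \<delta> n_in b i = b i * bmax b i * (1/2 + ln (2 * real n_in / \<delta>))"

fun sigma2 :: "real \<Rightarrow> nat \<Rightarrow> (nat \<Rightarrow> real) \<Rightarrow> nat \<Rightarrow> real" where
  "sigma2 \<delta> n_in b 0 = 0"
| "sigma2 \<delta> n_in b (Suc i) =
     sigma2 \<delta> n_in b i + (b (Suc i))\<^sup>2 *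
       max 0 (1 + sigma2 \<delta> n_in b i / (kh_a \<delta> n_in b (Suc i))\<^sup>2
                  * ((b (Suc i))\<^sup>2 - 2 * kh_a \<delta> n_in b (Suc i)))"

definition kh_r :: "real \<Rightarrow> nat \<Rightarrow> (nat \<Rightarrow> real) \<Rightarrow> nat \<Rightarrow> real" where
  "kh_r \<delta> n_in b i = (kh_a \<delta> n_in b i)\<^sup>2 / (2 * kh_a \<delta> n_in b i - (b i)\<^sup>2)"

end

theory Submission
  imports Defs
begin

text \<open>With \<open>t = b\<^sup>2 (2a - b\<^sup>2) / a\<^sup>2\<close>, which lies in \<open>[0, 1]\<close> since \<open>a\<^sup>2 - b\<^sup>2 (2a - b\<^sup>2) = (a - b\<^sup>2)\<^sup>2\<close>,
  the update of \<open>\<sigma>\<^sup>2\<close> is either the identity or the affine map \<open>s \<mapsto> (1 - t) s + b\<^sup>2\<close>,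
  whose fixed point is \<open>r = a\<^sup>2 / (2a - b\<^sup>2)\<close>. Being a contraction towards \<open>r\<close> that never
  overshoots it, the map keeps \<open>\<sigma>\<^sup>2\<close> below the running maximum of the \<open>r\<^sub>j\<close>.\<close>

lemma sigma_step_le_max:
  fixes a b s :: real
  assumes a: "0 < a" and d: "0 < 2 * a - b\<^sup>2"
  shows "s + b\<^sup>2 * max 0 (1 + s / a\<^sup>2 * (b\<^sup>2 - 2 * a)) \<le> max s (a\<^sup>2 / (2 * a - b\<^sup>2))"
proof (cases "1 + s / a\<^sup>2 * (b\<^sup>2 - 2 * a) \<le> 0")
  case True
  then show ?thesis by simp
next
  case False
  define t where "t = b\<^sup>2 * (2 * a - b\<^sup>2) / a\<^sup>2"
  define r where "r = a\<^sup>2 / (2 * a - b\<^sup>2)"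
  have a2: "0 < a\<^sup>2" using a by simp
  have t_nonneg: "0 \<le> t" unfolding t_def using d by simp
  have "a\<^sup>2 - b\<^sup>2 * (2 * a - b\<^sup>2) = (a - b\<^sup>2)\<^sup>2" by (simp add: power2_eq_square algebra_simps)
  then have "b\<^sup>2 * (2 * a - b\<^sup>2) \<le> a\<^sup>2" by (smt (verit) zero_le_power2)
  then have t_le_1: "t \<le> 1" unfolding t_def using a2 by simp
  have t_r: "t * r = b\<^sup>2" unfolding t_def r_def using a2 d by (simp add: field_simps)
  have update: "s + b\<^sup>2 * max 0 (1 + s / a\<^sup>2 * (b\<^sup>2 - 2 * a)) = s + b\<^sup>2 - t * s"
    using False a2 unfolding t_def by (simp add: field_simps)
  show ?thesis
  proof (cases "s \<le> r")
    case True
    have "s + b\<^sup>2 - t * s - r = (s - r) * (1 - t)" using t_r by (simp add: algebra_simps)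
    also have "\<dots> \<le> 0" using True t_le_1 by (simp add: mult_nonpos_nonneg)
    finally show ?thesis using update r_def by simp
  next
    case False
    have "s + b\<^sup>2 - t * s - s = t * (r - s)" using t_r by (simp add: algebra_simps)
    also have "\<dots> \<le> 0" using False t_nonneg by (simp add: mult_nonneg_nonpos)
    finally show ?thesis using update by simp
  qed
qed

lemma le_Max_of_step_le_max:
  fixes s g :: "nat \<Rightarrow> 'a::linorder"
  assumes step: "\<And>k. s (Suc k) \<le> max (s k) (g (Suc k))" and start: "s 0 \<le> g 1"
    and "1 \<le> k"
  shows "s k \<le> Max (g ` {1..k})"
  using \<open>1 \<le> k\<close>
proof (induction k rule: dec_induct)
  case base
  show ?case using step[of 0] start by (simp add: max_def)
next
  case (step k)
  have "{1..Suc k} = insert (Suc k) {1..k}" using step.hyps by auto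
  then have "Max (g ` {1..Suc k}) = max (g (Suc k)) (Max (g ` {1..k}))"
    using step.hyps by (simp add: Max_insert)
  then show ?case using assms(1)[of k] step.IH by (simp add: max_def split: if_splits)
qed

lemma b_le_bmax: "1 \<le> j \<Longrightarrow> b j \<le> bmax b j"
  unfolding bmax_def by (intro Max_ge) auto

lemma kh_log_factor_gt_half:
  assumes "0 < \<delta>" and "\<delta> < 2 * real n_in"
  shows "1/2 < 1/2 + ln (2 * real n_in / \<delta>)"
  using assms by (simp add: field_simps)

lemma kh_a_pos:
  assumes "0 < \<delta>" and "\<delta> < 2 * real n_in" and "1 \<le> j" and "0 < b j"
  shows "0 < kh_a \<delta> n_in b j"
proof -
  have "0 < bmax b j" using b_le_bmax[OF \<open>1 \<le> j\<close>, of b] \<open>0 < b j\<close> by simp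
  then show ?thesis
    unfolding kh_a_def using kh_log_factor_gt_half[OF assms(1,2)] \<open>0 < b j\<close> by simp
qed

lemma kh_bmax_denominator_pos:
  assumes "0 < \<delta>" and "\<delta> < 2 * real n_in" and "1 \<le> j" and "0 < b j"
  shows "0 < 2 * kh_a \<delta> n_in b j - b j * bmax b j"
proof -
  define L where "L = 1/2 + ln (2 * real n_in / \<delta>)"
  have "0 < b j * bmax b j" using b_le_bmax[OF \<open>1 \<le> j\<close>, of b] \<open>0 < b j\<close> by simp
  moreover have "0 < 2 * L - 1" using kh_log_factor_gt_half[OF assms(1,2)] unfolding L_def by simp
  moreover have "2 * kh_a \<delta> n_in b j - b j * bmax b j = b j * bmax b j * (2 * L - 1)"
    unfolding kh_a_def L_def by (simp add: algebra_simps)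
  ultimately show ?thesis by simp
qed

lemma kh_bmax_denominator_le:
  assumes "1 \<le> j" and "0 \<le> b j"
  shows "2 * kh_a \<delta> n_in b j - b j * bmax b j \<le> 2 * kh_a \<delta> n_in b j - (b j)\<^sup>2"
  using mult_left_mono[OF b_le_bmax[OF \<open>1 \<le> j\<close>] \<open>0 \<le> b j\<close>] by (simp add: power2_eq_square)

lemma sigma2_Suc_le_max:
  assumes "0 < \<delta>" and "\<delta> < 2 * real n_in" and "0 < b (Suc k)"
  shows "sigma2 \<delta> n_in b (Suc k) \<le> max (sigma2 \<delta> n_in b k) (kh_r \<delta> n_in b (Suc k))"
proof -
  have "0 < 2 * kh_a \<delta> n_in b (Suc k) - (b (Suc k))\<^sup>2"
    using kh_bmax_denominator_pos[of \<delta> n_in "Suc k" b] kh_bmax_denominator_le[of "Suc k" b \<delta> n_in]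
      assms by fastforce
  moreover have "0 < kh_a \<delta> n_in b (Suc k)" using kh_a_pos[of \<delta> n_in "Suc k" b] assms by simp
  ultimately show ?thesis using sigma_step_le_max unfolding kh_r_def by simp
qed

theorem lemmaB1:
  fixes \<delta> :: real and n_in :: nat and b :: "nat \<Rightarrow> real" and i :: nat
  assumes "0 < \<delta>" and "\<delta> < 1"
    and "even n_in" and "2 \<le> n_in"
    and "\<And>j. 1 \<le> j \<Longrightarrow> 0 < b j"
    and "1 \<le> i"
  shows "sigma2 \<delta> n_in b i \<le> Max ((\<lambda>j. max ((b j)\<^sup>2) (kh_r \<delta> n_in b j)) ` {1..i})
    \<and> kh_r \<delta> n_in b i \<le> (kh_a \<delta> n_in b i)\<^sup>2 / (2 * kh_a \<delta> n_in b i - b i * bmax b i)"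
proof
  \<comment> \<open>Of the hypotheses on \<open>\<delta>\<close> and \<open>n_in\<close> only \<open>0 < \<delta> < 2 n_in\<close> matters; parity is irrelevant.\<close>
  have \<delta>: "\<delta> < 2 * real n_in" using assms(2,4) by linarith
  have "sigma2 \<delta> n_in b (Suc k) \<le> max (sigma2 \<delta> n_in b k) (max ((b (Suc k))\<^sup>2) (kh_r \<delta> n_in b (Suc k)))"
    for k using sigma2_Suc_le_max[of \<delta> n_in b k] assms(1,5) \<delta> by fastforce
  then show "sigma2 \<delta> n_in b i \<le> Max ((\<lambda>j. max ((b j)\<^sup>2) (kh_r \<delta> n_in b j)) ` {1..i})"
    by (rule le_Max_of_step_le_max[OF _ _ assms(6)]) (simp add: le_max_iff_disj)
  have "0 < b i" using assms(5,6) .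
  then have "0 < 2 * kh_a \<delta> n_in b i - b i * bmax b i"
    and "2 * kh_a \<delta> n_in b i - b i * bmax b i \<le> 2 * kh_a \<delta> n_in b i - (b i)\<^sup>2"
    using kh_bmax_denominator_pos[OF assms(1) \<delta> assms(6)] kh_bmax_denominator_le[OF assms(6)] by auto
  then show "kh_r \<delta> n_in b i \<le> (kh_a \<delta> n_in b i)\<^sup>2 / (2 * kh_a \<delta> n_in b i - b i * bmax b i)"
    unfolding kh_r_def by (intro divide_left_mono) auto
qed

end
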